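(* Let $\mathbf{x}_1,\dots,\mathbf{x}_m\in\mathbb{R}^n$ and $y_1,\dots,y_m\in\mathbb{R}$ be such that $y_i=\phi(\mathbf{x}_i)$ for $i=1,\dots,m$, for some function $\phi:\mathbb{R}^n\to\mathbb{R}$. Then for every $\varepsilon>0$ there exist $T>0$ and a function $d_T\in\mathrm{DLSE}_T$ with rational parameters such that $$|d_T(\mathbf{x}_i)-y_i|\leqslant\varepsilon,\quad i=1,\dots,m.$$
   Context: For $T>0$, $\mathrm{LSE}_T$ denotes the class of functions $f_T:\mathbb{R}^n\to\mathbb{R}$ of the form $$f_T(\mathbf{x})=T\log\Big(\sum_{k=1}^K \exp\big(\langle\boldsymbol{\alpha}^{(k)},\mathbf{x}\rangle/T+\beta_k/T\big)\Big)$$ for some positive integer $K$, vectors $\boldsymbol{\alpha}^{(k)}\in\mathbb{R}^n$ and real numbers $\beta_k$. Such a function has rational parameters if $T$ is rational and it can be written in this form with all entries of the $\boldsymbol{\alpha}^{(k)}$ and all $\beta_k$ rational. $\mathrm{DLSE}_T$ is the class of functions $g_T-h_T$ with $g_T,h_T\in\mathrm{LSE}_T$ (same $T$); such a function has rational parameters if $g_T$ and $h_T$ both have rational parameters. *)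

theory Defs
  imports "HOL-Analysis.Analysis"
begin

definition lse_fun :: "real \<Rightarrow> ((real ^ 'n) \<times> real) list \<Rightarrow> real ^ 'n \<Rightarrow> real" where
  "lse_fun T ps x = T * ln (\<Sum>p\<leftarrow>ps. exp ((fst p \<bullet> x) / T + snd p / T))"

definition LSE :: "real \<Rightarrow> (real ^ 'n \<Rightarrow> real) set" where
  "LSE T = {f. \<exists>ps. ps \<noteq> [] \<and> f = lse_fun T ps}"

definition LSE_rat :: "real \<Rightarrow> (real ^ 'n \<Rightarrow> real) set" where
  "LSE_rat T = {f. T \<in> \<rat> \<and> (\<exists>ps. ps \<noteq> [] \<and> f = lse_fun T ps \<and>
      (\<forall>p\<in>set ps. (\<forall>i. fst p $ i \<in> \<rat>) \<and> snd p \<in> \<rat>))}"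

definition DLSE :: "real \<Rightarrow> (real ^ 'n \<Rightarrow> real) set" where
  "DLSE T = {d. \<exists>g h. g \<in> LSE T \<and> h \<in> LSE T \<and> d = (\<lambda>x. g x - h x)}"

definition DLSE_rat :: "real \<Rightarrow> (real ^ 'n \<Rightarrow> real) set" where
  "DLSE_rat T = {d. \<exists>g h. g \<in> LSE_rat T \<and> h \<in> LSE_rat T \<and> d = (\<lambda>x. g x - h x)}"

end

theory Submission
  imports Defs
begin

text \<open>Choose \<open>C \<ge> 0\<close> so large that \<open>y\<^sub>j - C \<parallel>x\<^sub>i - x\<^sub>j\<parallel>\<^sup>2 \<le> y\<^sub>i\<close> for all nodes; this is possible
  because \<open>x\<^sub>i = x\<^sub>j\<close> forces \<open>y\<^sub>i = y\<^sub>j\<close>. The tangent planes at the nodes \<open>x\<^sub>j\<close> of the paraboloids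
  \<open>C \<parallel>z\<parallel>\<^sup>2 + y\<^sub>j\<close> and \<open>C \<parallel>z\<parallel>\<^sup>2\<close> then give two max-affine functions whose values at \<open>x\<^sub>i\<close> are
  \<open>C \<parallel>x\<^sub>i\<parallel>\<^sup>2 + y\<^sub>i\<close> and \<open>C \<parallel>x\<^sub>i\<parallel>\<^sup>2\<close>, so their difference interpolates the data exactly.
  A log-sum-exp function with \<open>K\<close> terms lies between the maximum of its affine terms and that
  maximum plus \<open>T ln K\<close>, and rounding the parameters to rationals moves the affine terms
  uniformly little on a bounded set; a small rational \<open>T\<close> finishes the proof.\<close>

definition affine_value :: "('a::real_inner) \<times> real \<Rightarrow> 'a \<Rightarrow> real" where
  "affine_value p z = fst p \<bullet> z + snd p"

definition max_affine :: "(('a::real_inner) \<times> real) list \<Rightarrow> 'a \<Rightarrow> real" where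
  "max_affine ps z = Max ((\<lambda>p. affine_value p z) ` set ps)"

definition rational_param :: "(real ^ 'n) \<times> real \<Rightarrow> bool" where
  "rational_param p \<longleftrightarrow> (\<forall>i. fst p $ i \<in> \<rat>) \<and> snd p \<in> \<rat>"

lemma lse_fun_eq_affine_value:
  "lse_fun T ps z = T * ln (\<Sum>p\<leftarrow>ps. exp (affine_value p z / T))"
  by (simp add: lse_fun_def affine_value_def add_divide_distrib)

lemma affine_value_le_lse_fun:
  assumes "T > 0" "p \<in> set ps"
  shows "affine_value p z \<le> lse_fun T ps z"
proof -
  let ?e = "\<lambda>p. exp (affine_value p z / T)"
  have "?e p \<le> (\<Sum>p\<leftarrow>ps. ?e p)"
    using assms(2) by (intro member_le_sum_list) auto
  then have "ln (?e p) \<le> ln (\<Sum>p\<leftarrow>ps. ?e p)"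
    by (rule ln_mono) simp
  then show ?thesis
    using assms(1) by (simp add: lse_fun_eq_affine_value pos_divide_le_eq mult.commute)
qed

lemma max_affine_le_lse_fun:
  assumes "T > 0" "ps \<noteq> []"
  shows "max_affine ps z \<le> lse_fun T ps z"
  using assms by (simp add: max_affine_def affine_value_le_lse_fun)

lemma lse_fun_le_max_affine:
  assumes "T > 0" "ps \<noteq> []"
  shows "lse_fun T ps z \<le> max_affine ps z + T * ln (length ps)"
proof -
  let ?e = "\<lambda>p. exp (affine_value p z / T)"
  let ?M = "max_affine ps z"
  have "?e p \<le> exp (?M / T)" if "p \<in> set ps" for p
    using that assms by (auto simp: max_affine_def intro!: divide_right_mono)
  then have "(\<Sum>p\<leftarrow>ps. ?e p) \<le> length ps * exp (?M / T)"
    using sum_list_mono[of ps ?e "\<lambda>_. exp (?M / T)"] by (simp add: sum_list_triv)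
  moreover have "0 < (\<Sum>p\<leftarrow>ps. ?e p)"
    using sum_list_strict_mono[of ps "\<lambda>_. 0" ?e] assms(2) by simp
  ultimately have "ln (\<Sum>p\<leftarrow>ps. ?e p) \<le> ln (length ps) + ?M / T"
    using assms(2) by (simp add: ln_mult flip: ln_le_cancel_iff)
  then show ?thesis
    using assms(1) by (simp add: lse_fun_eq_affine_value field_simps)
qed

lemma abs_lse_fun_minus_max_affine_le:
  assumes "T > 0" "ps \<noteq> []"
  shows "\<bar>lse_fun T ps z - max_affine ps z\<bar> \<le> T * ln (length ps)"
  using max_affine_le_lse_fun[OF assms, of z] lse_fun_le_max_affine[OF assms, of z] by linarith

lemma Max_image_le_Max_image_plus:
  fixes f g :: "'a \<Rightarrow> real"
  assumes "finite J" "J \<noteq> {}" "\<And>j. j \<in> J \<Longrightarrow> f j - g j \<le> \<eta>"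
  shows "Max (f ` J) \<le> Max (g ` J) + \<eta>"
proof -
  have "f j \<le> Max (g ` J) + \<eta>" if "j \<in> J" for j
    using assms(3)[OF that] Max_ge[OF finite_imageI[OF assms(1)] imageI[OF that, of g]]
    by linarith
  then show ?thesis
    using assms(1,2) by simp
qed

lemma abs_Max_image_diff_le:
  fixes f g :: "'a \<Rightarrow> real"
  assumes "finite J" "J \<noteq> {}" "\<And>j. j \<in> J \<Longrightarrow> \<bar>f j - g j\<bar> \<le> \<eta>"
  shows "\<bar>Max (f ` J) - Max (g ` J)\<bar> \<le> \<eta>"
proof -
  have "Max (f ` J) \<le> Max (g ` J) + \<eta>"
    using assms by (intro Max_image_le_Max_image_plus) (auto simp: abs_le_iff)
  moreover have "Max (g ` J) \<le> Max (f ` J) + \<eta>"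
    using assms by (intro Max_image_le_Max_image_plus) (auto simp: abs_le_iff)
  ultimately show ?thesis
    by simp
qed

lemma abs_max_affine_map_diff_le:
  assumes "ps \<noteq> []" "\<And>p. p \<in> set ps \<Longrightarrow> \<bar>affine_value (r p) z - affine_value p z\<bar> \<le> \<eta>"
  shows "\<bar>max_affine (map r ps) z - max_affine ps z\<bar> \<le> \<eta>"
  unfolding max_affine_def set_map image_image
  using assms by (intro abs_Max_image_diff_le) auto

lemma abs_affine_value_diff_le:
  assumes "norm (fst q - fst p) \<le> \<delta>" "\<bar>snd q - snd p\<bar> \<le> \<delta>"
  shows "\<bar>affine_value q z - affine_value p z\<bar> \<le> \<delta> * (norm z + 1)"
proof -
  have "\<bar>affine_value q z - affine_value p z\<bar> \<le> \<bar>(fst q - fst p) \<bullet> z\<bar> + \<bar>snd q - snd p\<bar>"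
    by (simp add: affine_value_def inner_diff_left)
  also have "\<dots> \<le> norm (fst q - fst p) * norm z + \<delta>"
    using Cauchy_Schwarz_ineq2 assms(2) by (rule add_mono)
  also have "\<dots> \<le> \<delta> * norm z + \<delta>"
    using assms(1) by (simp add: mult_right_mono)
  finally show ?thesis
    by (simp add: algebra_simps)
qed

lemma vector_rational_approximation:
  fixes a :: "real ^ 'n"
  assumes "e > 0"
  obtains q where "\<And>k. q $ k \<in> \<rat>" "norm (q - a) < e"
proof -
  have "e / CARD('n) > 0"
    using assms by simp
  then have "\<forall>k. \<exists>r\<in>\<rat>. \<bar>r - a $ k\<bar> < e / CARD('n)"
    by (meson rational_approximation)
  then obtain q where q: "\<And>k. q $ k \<in> \<rat>" "\<And>k. \<bar>q $ k - a $ k\<bar> < e / CARD('n)"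
    by (auto simp: lambda_skolem Bex_def)
  have "norm (q - a) \<le> (\<Sum>k\<in>UNIV. \<bar>q $ k - a $ k\<bar>)"
    using norm_le_l1_cart[of "q - a"] by simp
  also have "\<dots> < (\<Sum>(k::'n)\<in>UNIV. e / CARD('n))"
    by (rule sum_strict_mono) (simp_all add: q(2))
  also have "\<dots> = e"
    by simp
  finally show ?thesis
    using q(1) that by blast
qed

lemma rational_param_approximation:
  fixes p :: "(real ^ 'n) \<times> real"
  assumes "e > 0"
  obtains q where "rational_param q" "norm (fst q - fst p) < e" "\<bar>snd q - snd p\<bar> < e"
proof -
  obtain a where "\<And>k. a $ k \<in> \<rat>" "norm (a - fst p) < e"
    using vector_rational_approximation assms by blast
  moreover obtain b where "b \<in> \<rat>" "\<bar>b - snd p\<bar> < e"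
    using rational_approximation assms by blast
  ultimately show ?thesis
    using that[of "(a, b)"] by (simp add: rational_param_def)
qed

lemma lse_fun_in_LSE_rat:
  assumes "T \<in> \<rat>" "ps \<noteq> []" "\<And>p. p \<in> set ps \<Longrightarrow> rational_param p"
  shows "lse_fun T ps \<in> LSE_rat T"
  using assms unfolding LSE_rat_def rational_param_def by blast

lemma LSE_rat_approximates_max_affine:
  fixes ps :: "((real ^ 'n) \<times> real) list"
  assumes "ps \<noteq> []" "bounded S" "\<epsilon> > 0" "T \<in> \<rat>" "T > 0"
  shows "\<exists>g\<in>LSE_rat T. \<forall>z\<in>S. \<bar>g z - max_affine ps z\<bar> \<le> \<epsilon> + T * ln (length ps)"
proof -
  obtain B where "B > 0" and B: "\<And>z. z \<in> S \<Longrightarrow> norm z \<le> B"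
    using assms(2) unfolding bounded_pos by blast
  define \<delta> where "\<delta> = \<epsilon> / (B + 1)"
  have "\<delta> > 0"
    unfolding \<delta>_def using \<open>B > 0\<close> assms(3) by simp
  have "\<forall>p :: (real ^ 'n) \<times> real.
      \<exists>q. rational_param q \<and> norm (fst q - fst p) < \<delta> \<and> \<bar>snd q - snd p\<bar> < \<delta>"
  proof
    fix p :: "(real ^ 'n) \<times> real"
    show "\<exists>q. rational_param q \<and> norm (fst q - fst p) < \<delta> \<and> \<bar>snd q - snd p\<bar> < \<delta>"
      by (rule rational_param_approximation[OF \<open>\<delta> > 0\<close>, of p]) blast
  qed
  then obtain r :: "(real ^ 'n) \<times> real \<Rightarrow> (real ^ 'n) \<times> real"
    where r: "\<And>p. rational_param (r p)"
      "\<And>p. norm (fst (r p) - fst p) < \<delta>" "\<And>p. \<bar>snd (r p) - snd p\<bar> < \<delta>"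
    by metis
  have rounding: "\<bar>max_affine (map r ps) z - max_affine ps z\<bar> \<le> \<epsilon>" if "z \<in> S" for z
  proof (rule abs_max_affine_map_diff_le[OF assms(1)])
    fix p
    have "\<bar>affine_value (r p) z - affine_value p z\<bar> \<le> \<delta> * (norm z + 1)"
      by (intro abs_affine_value_diff_le less_imp_le r(2,3))
    also have "\<dots> \<le> \<delta> * (B + 1)"
      using B[OF that] \<open>\<delta> > 0\<close> by (intro mult_left_mono) auto
    also have "\<dots> = \<epsilon>"
      unfolding \<delta>_def using \<open>B > 0\<close> by simp
    finally show "\<bar>affine_value (r p) z - affine_value p z\<bar> \<le> \<epsilon>" .
  qed
  have "\<bar>lse_fun T (map r ps) z - max_affine ps z\<bar> \<le> \<epsilon> + T * ln (length ps)" if "z \<in> S" for z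
  proof -
    have "\<bar>lse_fun T (map r ps) z - max_affine (map r ps) z\<bar> \<le> T * ln (length ps)"
      using abs_lse_fun_minus_max_affine_le[of T "map r ps" z] assms(1,5) by simp
    then show ?thesis
      using rounding[OF that] by linarith
  qed
  moreover have "lse_fun T (map r ps) \<in> LSE_rat T"
    by (rule lse_fun_in_LSE_rat) (use assms(1,4) r(1) in auto)
  ultimately show ?thesis
    by blast
qed

lemma DLSE_rat_approximates_max_affine_diff:
  fixes ps qs :: "((real ^ 'n) \<times> real) list"
  assumes "ps \<noteq> []" "qs \<noteq> []" "bounded S" "\<epsilon> > 0"
  shows "\<exists>T > 0. \<exists>d \<in> DLSE_rat T. \<forall>z\<in>S. \<bar>d z - (max_affine ps z - max_affine qs z)\<bar> \<le> \<epsilon>"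
proof -
  define L where "L = ln (length ps) + ln (length qs)"
  have "ln (length ps) \<ge> 0" "ln (length qs) \<ge> 0"
    using assms(1,2) by (simp_all add: Suc_le_eq)
  then have "L \<ge> 0"
    unfolding L_def by linarith
  then have "\<epsilon> / 2 / (L + 1) > 0"
    using assms(4) by simp
  then obtain T where T: "T \<in> \<rat>" "0 < T" "T < \<epsilon> / 2 / (L + 1)"
    using Rats_dense_in_real[of 0 "\<epsilon> / 2 / (L + 1)"] by blast
  have "T * (L + 1) < \<epsilon> / 2"
    using T(3) \<open>L \<ge> 0\<close> by (simp add: pos_less_divide_eq algebra_simps)
  moreover have "T * L \<le> T * (L + 1)"
    using T(2) by simp
  ultimately have "T * L \<le> \<epsilon> / 2"
    by linarith
  have "\<epsilon> / 4 > 0"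
    using assms(4) by simp
  obtain g where "g \<in> LSE_rat T"
    and g: "\<And>z. z \<in> S \<Longrightarrow> \<bar>g z - max_affine ps z\<bar> \<le> \<epsilon> / 4 + T * ln (length ps)"
    using LSE_rat_approximates_max_affine[OF assms(1,3) \<open>\<epsilon> / 4 > 0\<close> T(1,2)] by blast
  obtain h where "h \<in> LSE_rat T"
    and h: "\<And>z. z \<in> S \<Longrightarrow> \<bar>h z - max_affine qs z\<bar> \<le> \<epsilon> / 4 + T * ln (length qs)"
    using LSE_rat_approximates_max_affine[OF assms(2,3) \<open>\<epsilon> / 4 > 0\<close> T(1,2)] by blast
  define d where "d = (\<lambda>z. g z - h z)"
  have "d \<in> DLSE_rat T"
    unfolding d_def DLSE_rat_def using \<open>g \<in> LSE_rat T\<close> \<open>h \<in> LSE_rat T\<close> by blast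
  moreover have "\<bar>d z - (max_affine ps z - max_affine qs z)\<bar> \<le> \<epsilon>" if "z \<in> S" for z
    using g[OF that] h[OF that] \<open>T * L \<le> \<epsilon> / 2\<close> unfolding d_def L_def distrib_left by linarith
  ultimately show ?thesis
    using T(2) by blast
qed

lemma exists_quadratic_dominating_constant:
  fixes x :: "'i \<Rightarrow> 'a::metric_space" and y :: "'i \<Rightarrow> real"
  assumes "finite J" "\<And>i j. i \<in> J \<Longrightarrow> j \<in> J \<Longrightarrow> x i = x j \<Longrightarrow> y i = y j"
  obtains C where "C \<ge> 0" "\<And>i j. i \<in> J \<Longrightarrow> j \<in> J \<Longrightarrow> y j - y i \<le> C * (dist (x i) (x j))\<^sup>2"
proof -
  define q where "q = (\<lambda>(i, j). \<bar>y j - y i\<bar> / (dist (x i) (x j))\<^sup>2)"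
  define C where "C = (\<Sum>ij\<in>J \<times> J. q ij)"
  have q_nonneg: "q ij \<ge> 0" for ij
    unfolding q_def by (simp add: case_prod_beta)
  have "C \<ge> 0"
    unfolding C_def using q_nonneg by (simp add: sum_nonneg)
  moreover have "y j - y i \<le> C * (dist (x i) (x j))\<^sup>2" if "i \<in> J" "j \<in> J" for i j
  proof (cases "x i = x j")
    case True
    then show ?thesis
      using assms(2)[OF that] by simp
  next
    case False
    then have "(dist (x i) (x j))\<^sup>2 > 0"
      by simp
    moreover have "q (i, j) \<le> C"
      unfolding C_def using that assms(1) q_nonneg by (intro member_le_sum) auto
    ultimately show ?thesis
      by (simp add: q_def pos_divide_le_eq)
  qed
  ultimately show ?thesis
    using that by blast
qed

text \<open>The tangent plane at \<open>a\<close> of the paraboloid \<open>z \<mapsto> C \<parallel>z\<parallel>\<^sup>2 + b\<close>.\<close>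

definition paraboloid_tangent :: "real \<Rightarrow> 'a::real_inner \<Rightarrow> real \<Rightarrow> 'a \<times> real" where
  "paraboloid_tangent C a b = ((2 * C) *\<^sub>R a, b - C * (norm a)\<^sup>2)"

lemma affine_value_paraboloid_tangent:
  "affine_value (paraboloid_tangent C a b) z = b + C * (norm z)\<^sup>2 - C * (norm (z - a))\<^sup>2"
  by (simp add: affine_value_def paraboloid_tangent_def power2_norm_eq_inner inner_diff_left
      inner_diff_right inner_commute algebra_simps)

lemma Max_paraboloid_tangents_at_node:
  assumes "finite J" "i \<in> J" "\<And>j. j \<in> J \<Longrightarrow> y j - y i \<le> C * (norm (x i - x j))\<^sup>2"
  shows "Max ((\<lambda>j. affine_value (paraboloid_tangent C (x j) (y j)) (x i)) ` J) = y i + C * (norm (x i))\<^sup>2"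
proof (rule Max_eqI)
  fix v
  assume "v \<in> (\<lambda>j. affine_value (paraboloid_tangent C (x j) (y j)) (x i)) ` J"
  then obtain j where "j \<in> J" "v = y j + C * (norm (x i))\<^sup>2 - C * (norm (x i - x j))\<^sup>2"
    by (auto simp: affine_value_paraboloid_tangent)
  then show "v \<le> y i + C * (norm (x i))\<^sup>2"
    using assms(3) by force
next
  show "y i + C * (norm (x i))\<^sup>2 \<in> (\<lambda>j. affine_value (paraboloid_tangent C (x j) (y j)) (x i)) ` J"
    using assms(2) by (intro rev_image_eqI[of i]) (simp_all add: affine_value_paraboloid_tangent)
qed (use assms(1) in simp)

lemma max_affine_diff_interpolates:
  fixes x :: "'i \<Rightarrow> 'a::real_inner" and y :: "'i \<Rightarrow> real"
  assumes "finite J" "\<And>i j. i \<in> J \<Longrightarrow> j \<in> J \<Longrightarrow> x i = x j \<Longrightarrow> y i = y j"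
  obtains ps qs where "ps \<noteq> []" "qs \<noteq> []"
    "\<And>i. i \<in> J \<Longrightarrow> max_affine ps (x i) - max_affine qs (x i) = y i"
proof (cases "J = {}")
  case True
  then show ?thesis
    using that[of "[(0, 0)]" "[(0, 0)]"] by simp
next
  case False
  obtain C where "C \<ge> 0" and C: "\<And>i j. i \<in> J \<Longrightarrow> j \<in> J \<Longrightarrow> y j - y i \<le> C * (dist (x i) (x j))\<^sup>2"
    using exists_quadratic_dominating_constant[of J x y, OF assms] by blast
  obtain js where js: "set js = J"
    using finite_list[OF assms(1)] by blast
  define ps where "ps = map (\<lambda>j. paraboloid_tangent C (x j) (y j)) js"
  define qs where "qs = map (\<lambda>j. paraboloid_tangent C (x j) 0) js"
  have "max_affine ps (x i) = y i + C * (norm (x i))\<^sup>2" if "i \<in> J" for i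
    unfolding ps_def max_affine_def set_map image_image js
    using assms(1) that C[of i] by (intro Max_paraboloid_tangents_at_node) (simp_all add: dist_norm)
  moreover have "max_affine qs (x i) = C * (norm (x i))\<^sup>2" if "i \<in> J" for i
    unfolding qs_def max_affine_def set_map image_image js
    using Max_paraboloid_tangents_at_node[of J i "\<lambda>_. 0" C x] assms(1) that \<open>C \<ge> 0\<close>
    by simp
  moreover have "ps \<noteq> []" "qs \<noteq> []"
    using False js by (auto simp: ps_def qs_def)
  ultimately show ?thesis
    using that by simp
qed

theorem corollary2:
  fixes x :: "nat \<Rightarrow> real ^ 'n" and y :: "nat \<Rightarrow> real"
    and \<phi> :: "real ^ 'n \<Rightarrow> real" and m :: nat and \<epsilon> :: real
  assumes "\<And>i. i \<in> {1..m} \<Longrightarrow> y i = \<phi> (x i)"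
    and "\<epsilon> > 0"
  shows "\<exists>T > 0. \<exists>d \<in> DLSE_rat T. \<forall>i \<in> {1..m}. \<bar>d (x i) - y i\<bar> \<le> \<epsilon>"
proof -
  have consistent: "y i = y j" if "i \<in> {1..m}" "j \<in> {1..m}" "x i = x j" for i j
    using assms(1)[OF that(1)] assms(1)[OF that(2)] that(3) by simp
  obtain ps qs where ps: "ps \<noteq> []" and qs: "qs \<noteq> []"
    and interpolates: "\<And>i. i \<in> {1..m} \<Longrightarrow> max_affine ps (x i) - max_affine qs (x i) = y i"
    using max_affine_diff_interpolates[where J = "{1..m}" and x = x and y = y] consistent by blast
  have "bounded (x ` {1..m})"
    by (intro finite_imp_bounded finite_imageI finite_atLeastAtMost)
  from DLSE_rat_approximates_max_affine_diff[OF ps qs this assms(2)]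
  obtain T d where "T > 0" "d \<in> DLSE_rat T"
    and approx: "\<forall>z\<in>x ` {1..m}. \<bar>d z - (max_affine ps z - max_affine qs z)\<bar> \<le> \<epsilon>"
    by blast
  have "\<bar>d (x i) - y i\<bar> \<le> \<epsilon>" if "i \<in> {1..m}" for i
  proof -
    have "\<bar>d (x i) - (max_affine ps (x i) - max_affine qs (x i))\<bar> \<le> \<epsilon>"
      using approx that by simp
    then show ?thesis
      using interpolates[OF that] by simp
  qed
  then show ?thesis
    using \<open>T > 0\<close> \<open>d \<in> DLSE_rat T\<close> by blast
qed

end
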